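(* Let $t$ be a positive integer, $\mathbf v$ a good vector with respect to $t$, and $n=4t+1$ if $|\mathbf v|=2t$, $n=4t+2$ if $|\mathbf v|=2t+1$. Then the code of Construction C built from $\mathbf v$ is an $\bigl(n,(t+1)n,k,n\bigr)$-BAC over $\mathbb{F}_q$ with $k=\bigl\lfloor(\sqrt{t+\tfrac14}+\tfrac12)^2\bigr\rfloor$.
   Context: Fix a finite field $\mathbb{F}_q$. Good vector: for a positive integer $t$, $\mathbf v=(v_1,\dots,v_{2t})\in[t]^{2t}$ or $\mathbf v\in\{0,\dots,t\}^{2t+1}$ is good w.r.t. $t$ if every $j\in[t]$ appears exactly twice in $\mathbf v$ and whenever $v_i=v_{i'}=j\in[t]$ with $i<i'$ then $i'-i=j$; for $j\in[t]$ let $j(\mathbf v)=\max\{i:v_i=j\}$. Construction C: indices modulo $n$ with representatives in $[n]$; for $\mathbf x\in\mathbb{F}_q^n$, $i\in[n]$, $j\in[t]$ put $y_{i,j}=x_{i-t-j(\mathbf v)}+x_{i-t-j(\mathbf v)+j}$ and $\mathcal C(\mathbf x)=(\mathbf c_1,\dots,\mathbf c_n)$ with $\mathbf c_i=(x_i,y_{i,1},\dots,y_{i,t})$. An $(n,N,k,m)$-batch array code (BAC) over $\mathbb{F}_q$ is an $\mathbb{F}_q$-linear map $\mathbf x\mapsto(\mathbf c_1,\dots,\mathbf c_m)$ with buckets $\mathbf c_\ell\in\mathbb{F}_q^{N_\ell}$, $N_\ell\ge1$, $\sum_\ell N_\ell=N$, such that for every multiset $\{\{i_1,\dots,i_k\}\}$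 of elements of $[n]$ there is a partition of $[m]$ into $k$ sets $R_1,\dots,R_k$ such that for each $j\in[k]$, $x_{i_j}$ is an $\mathbb{F}_q$-linear combination of values $f_\ell(\mathbf c_\ell)$, $\ell\in R_j$, for some linear functionals $f_\ell$ (independent of $\mathbf x$). *)

theory Defs
  imports Complex_Main
begin

text \<open>Vectors are lists; position i (1-indexed, as in the paper) is v ! (i - 1).\<close>

definition good_vector :: "nat \<Rightarrow> nat list \<Rightarrow> bool" where
  "good_vector t v \<longleftrightarrow>
     ((length v = 2 * t \<and> set v \<subseteq> {1..t}) \<or> (length v = 2 * t + 1 \<and> set v \<subseteq> {0..t})) \<and>
     (\<forall>j\<in>{1..t}. card {i \<in> {1..length v}. v ! (i - 1) = j} = 2) \<and>
     (\<forall>i i' j. 1 \<le> i \<and> i < i' \<and> i' \<le> length v \<and> j \<in> {1..t} \<and>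
               v ! (i - 1) = j \<and> v ! (i' - 1) = j \<longrightarrow> i' - i = j)"

definition jpos :: "nat list \<Rightarrow> nat \<Rightarrow> nat" where
  "jpos v j = Max {i \<in> {1..length v}. v ! (i - 1) = j}"

definition idx :: "nat \<Rightarrow> int \<Rightarrow> nat" where
  "idx n m = nat ((m - 1) mod int n) + 1"

text \<open>Construction C. The message x is a function on indices {1..n}.
  constrC t v n x l r is coordinate r (0-indexed, r \<le> t) of bucket c_l:
  coordinate 0 is x_l, coordinate j \<in> {1..t} is y_{l,j}.\<close>
definition constrC :: "nat \<Rightarrow> nat list \<Rightarrow> nat \<Rightarrow> (nat \<Rightarrow> 'a::field) \<Rightarrow> nat \<Rightarrow> nat \<Rightarrow> 'a" where
  "constrC t v n x l r =
     (if r = 0 then x l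
      else x (idx n (int l - int t - int (jpos v r)))
         + x (idx n (int l - int t - int (jpos v r) + int r)))"

text \<open>(n,N,k,m)-batch array code: bucket sizes Nb l (l \<in> {1..m}), encoder enc x l r
  giving coordinate r < Nb l of bucket l. Linear functionals on F^(Nb l) are written
  out as weight vectors.\<close>
definition is_BAC :: "nat \<Rightarrow> nat \<Rightarrow> nat \<Rightarrow> nat \<Rightarrow> (nat \<Rightarrow> nat)
     \<Rightarrow> ((nat \<Rightarrow> 'a::field) \<Rightarrow> nat \<Rightarrow> nat \<Rightarrow> 'a) \<Rightarrow> bool" where
  "is_BAC n N k m Nb enc \<longleftrightarrow>
     (\<forall>l\<in>{1..m}. Nb l \<ge> 1) \<and> (\<Sum>l\<in>{1..m}. Nb l) = N \<and>
     (\<forall>x y l r. l \<in> {1..m} \<and> r < Nb l \<longrightarrow> enc (\<lambda>i. x i + y i) l r = enc x l r + enc y l r) \<and>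
     (\<forall>x c l r. l \<in> {1..m} \<and> r < Nb l \<longrightarrow> enc (\<lambda>i. c * x i) l r = c * enc x l r) \<and>
     (\<forall>is. length is = k \<and> set is \<subseteq> {1..n} \<longrightarrow>
        (\<exists>R :: nat \<Rightarrow> nat set.
           (\<forall>j<k. R j \<noteq> {}) \<and> (\<forall>j<k. \<forall>j'<k. j \<noteq> j' \<longrightarrow> R j \<inter> R j' = {}) \<and>
           (\<Union>j<k. R j) = {1..m} \<and>
           (\<forall>j<k. \<exists>(w :: nat \<Rightarrow> nat \<Rightarrow> 'a) (a :: nat \<Rightarrow> 'a). \<forall>x.
               x (is ! j) = (\<Sum>l\<in>R j. a l * (\<Sum>r<Nb l. w l r * enc x l r)))))"

end

theory Submission
  imports Defs "HOL-Library.Disjoint_Sets"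
begin

text \<open>
  Each message symbol \<open>x\<^sub>i\<close> has \<open>2t\<close> recovery sets: for \<open>j \<in> [t]\<close>, \<open>x\<^sub>i\<close> is the first
  summand of the coordinate \<open>y\<^sub>j\<close> of one bucket and the second summand of that of another, so
  \<open>x\<^sub>i = y\<^sub>j - x\<^sub>i\<^sub>\<plusminus>\<^sub>j\<close> can be read from two buckets. Because every \<open>j\<close> occupies two positions
  of the good vector \<open>v\<close> and \<open>n \<ge> 2t + |v| + 1\<close>, these \<open>2t\<close> pairs are pairwise disjoint and
  avoid bucket \<open>i\<close>.

  To serve a request of \<open>k\<close> symbols with \<open>d\<close> distinct elements, of which \<open>i0\<close> occurs most
  often (\<open>M\<close> times), every first occurrence gets its own bucket and every repeat a recovery
  set, chosen greedily: a recovery set of \<open>i\<close> meeting the buckets in use meets them outside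
  \<open>i\<close>, so by disjointness a free choice remains as long as
  \<open>d + 2 (repeats of other elements) + (repeats of i0) \<le> 2t + 1\<close>. As \<open>k \<le> dM\<close>, AM-GM shows
  that this holds whenever \<open>(k - t)(k - t - 1) \<le> t\<close>, which is what the value of \<open>k\<close> in the
  theorem guarantees. Unused buckets are added to an arbitrary part of the partition.
\<close>

section \<open>Serving a request by disjoint recovery sets\<close>

lemma disjoint_family_on_piecewise:
  assumes "disjoint_family_on S A" "disjoint_family_on T B"
    and "\<And>b. b \<in> B \<Longrightarrow> T b \<inter> (\<Union>a\<in>A. S a) = {}"
  shows "disjoint_family_on (\<lambda>j. if j \<in> A then S j else T j) (A \<union> B)"
  unfolding disjoint_family_on_def
proof (intro ballI impI)
  fix a b assume ab: "a \<in> A \<union> B" "b \<in> A \<union> B" "a \<noteq> b"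
  show "(if a \<in> A then S a else T a) \<inter> (if b \<in> A then S b else T b) = {}"
  proof (cases "a \<in> A"; cases "b \<in> A")
    assume "a \<in> A" "b \<in> A"
    then show ?thesis using assms(1) ab(3) by (simp add: disjoint_family_onD)
  next
    assume "a \<in> A" "b \<notin> A"
    then show ?thesis using assms(3)[of b] ab(2) by auto
  next
    assume "a \<notin> A" "b \<in> A"
    then show ?thesis using assms(3)[of a] ab(1) by auto
  next
    assume "a \<notin> A" "b \<notin> A"
    then show ?thesis using assms(2) ab by (simp add: disjoint_family_onD)
  qed
qed

definition first_occurrences :: "'a list \<Rightarrow> nat set" where
  "first_occurrences xs = {j. j < length xs \<and> (\<forall>j'<j. xs ! j' \<noteq> xs ! j)}"

definition occurrences :: "'a list \<Rightarrow> 'a \<Rightarrow> nat set" where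
  "occurrences xs i = {j. j < length xs \<and> xs ! j = i}"

lemma inj_on_nth_first_occurrences: "inj_on (nth xs) (first_occurrences xs)"
proof (rule inj_onI)
  fix a b
  assume "a \<in> first_occurrences xs" "b \<in> first_occurrences xs" "xs ! a = xs ! b"
  then show "a = b"
    unfolding first_occurrences_def by (cases a b rule: linorder_cases) auto
qed

lemma nth_image_first_occurrences: "nth xs ` first_occurrences xs = set xs"
proof
  show "nth xs ` first_occurrences xs \<subseteq> set xs"
    unfolding first_occurrences_def by auto
  show "set xs \<subseteq> nth xs ` first_occurrences xs"
  proof
    fix i assume "i \<in> set xs"
    then obtain j where j: "j < length xs" "xs ! j = i"
      by (auto simp: in_set_conv_nth)
    define j0 where "j0 = (LEAST j. xs ! j = i)"
    have "xs ! j0 = i" "j0 \<le> j"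
      unfolding j0_def using j(2) by (auto intro: LeastI Least_le)
    moreover have "\<forall>j'<j0. xs ! j' \<noteq> i"
      unfolding j0_def using not_less_Least by blast
    ultimately show "i \<in> nth xs ` first_occurrences xs"
      using j(1) unfolding first_occurrences_def by force
  qed
qed

lemma card_first_occurrences: "card (first_occurrences xs) = card (set xs)"
  using card_image[OF inj_on_nth_first_occurrences] nth_image_first_occurrences by metis

lemma card_occurrences_le_Suc_repeats:
  "card (occurrences xs i) \<le> Suc (card (occurrences xs i - first_occurrences xs))"
proof -
  have "card (occurrences xs i \<inter> first_occurrences xs) \<le> 1"
    using inj_on_nth_first_occurrences[of xs]
    by (auto simp: card_le_Suc0_iff_eq occurrences_def dest: inj_onD)
  moreover have "occurrences xs i
      = (occurrences xs i - first_occurrences xs) \<union> (occurrences xs i \<inter> first_occurrences xs)"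
    by blast
  then have "card (occurrences xs i)
      \<le> card (occurrences xs i - first_occurrences xs) + card (occurrences xs i \<inter> first_occurrences xs)"
    by (metis card_Un_le)
  ultimately show ?thesis
    by linarith
qed

lemma length_le_card_set_mult:
  assumes "\<And>i. i \<in> set xs \<Longrightarrow> card (occurrences xs i) \<le> M"
  shows "length xs \<le> card (set xs) * M"
proof -
  have "{..<length xs} = (\<Union>i\<in>set xs. occurrences xs i)"
    unfolding occurrences_def by (auto simp: nth_mem)
  then have "length xs = card (\<Union>i\<in>set xs. occurrences xs i)"
    by (metis card_lessThan)
  also have "\<dots> \<le> (\<Sum>i\<in>set xs. card (occurrences xs i))"
    by (rule card_UN_le) simp
  also have "\<dots> \<le> (\<Sum>i\<in>set xs. M)"
    by (rule sum_mono) (rule assms)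
  finally show ?thesis
    by simp
qed

text \<open>If \<open>d + M \<le> 2s - 1\<close> for \<open>s = k - t\<close>, then by AM-GM \<open>4dM \<le> (2s - 1)\<^sup>2\<close>, so
  \<open>k \<le> dM \<le> s(s - 1) \<le> t < k\<close>.\<close>
lemma twice_le_of_le_mult:
  fixes d M k t :: nat
  assumes "k \<le> d * M" "(k - t) * (k - t - 1) \<le> t"
  shows "2 * k \<le> 2 * t + d + M"
proof (rule ccontr)
  assume contra: "\<not> 2 * k \<le> 2 * t + d + M"
  define s where "s = k - t"
  have s: "k = t + s" "1 \<le> s" "d + M + 1 \<le> 2 * s"
    using contra unfolding s_def by arith+
  have "int (s * (s - 1)) \<le> int t"
    using assms(2) unfolding s_def by (simp only: of_nat_le_iff)
  then have "int s * (int s - 1) \<le> int t"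
    using s(2) by (simp add: of_nat_diff)
  moreover have "(int d + int M) * (int d + int M) \<le> (2 * int s - 1) * (2 * int s - 1)"
    using s(3) by (intro mult_mono) auto
  moreover have "4 * (int d * int M) \<le> (int d + int M) * (int d + int M)"
    using zero_le_square[of "int d - int M"] by (simp add: algebra_simps)
  moreover have "int k \<le> int d * int M"
    using assms(1) by (metis of_nat_le_iff of_nat_mult)
  ultimately show False
    using s(1,2) by (simp add: algebra_simps)
qed

lemma request_budget:
  assumes "xs \<noteq> []" "(length xs - t) * (length xs - t - 1) \<le> t"
  shows "\<exists>i0\<in>set xs. card (set xs)
           + 2 * card ({..<length xs} - first_occurrences xs - occurrences xs i0)
           + card (occurrences xs i0 - first_occurrences xs) \<le> 2 * t + 1"
proof -
  let ?mult = "\<lambda>i. card (occurrences xs i)"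
  have "finite (?mult ` set xs)" "?mult ` set xs \<noteq> {}"
    using assms(1) by simp_all
  then obtain i0 where i0: "i0 \<in> set xs" "?mult i0 = Max (?mult ` set xs)"
    using Max_in by (metis (no_types, lifting) imageE)
  define F where "F = first_occurrences xs"
  define J2 where "J2 = {..<length xs} - F - occurrences xs i0"
  define J3 where "J3 = occurrences xs i0 - F"
  have "length xs \<le> card (set xs) * ?mult i0"
    using i0 by (intro length_le_card_set_mult) simp
  then have "2 * length xs \<le> 2 * t + card (set xs) + ?mult i0"
    using twice_le_of_le_mult assms(2) by blast
  moreover have "?mult i0 \<le> Suc (card J3)"
    unfolding J3_def F_def by (rule card_occurrences_le_Suc_repeats)
  moreover have "length xs = card F + card J2 + card J3"
  proof -
    have "{..<length xs} = F \<union> J2 \<union> J3"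
      unfolding F_def J2_def J3_def first_occurrences_def occurrences_def by auto
    moreover have "finite F" "finite J2" "finite J3"
      unfolding F_def J2_def J3_def first_occurrences_def occurrences_def by auto
    moreover have "F \<inter> J2 = {}" "(F \<union> J2) \<inter> J3 = {}"
      unfolding J2_def J3_def by auto
    ultimately show ?thesis
      by (metis card_Un_disjoint card_lessThan finite_Un)
  qed
  moreover have "card F = card (set xs)"
    unfolding F_def by (rule card_first_occurrences)
  ultimately have "card (set xs) + 2 * card J2 + card J3 \<le> 2 * t + 1"
    by linarith
  then show ?thesis
    using i0(1) unfolding J2_def J3_def F_def by blast
qed

text \<open>\<open>Q i c\<close> (\<open>c \<in> C\<close>) are the alternative sets of buckets from which \<open>x\<^sub>i\<close> can be
  decoded without reading bucket \<open>i\<close> itself.\<close>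
locale recovery_family =
  fixes V :: "'a set" and C :: "'c set" and Q :: "'a \<Rightarrow> 'c \<Rightarrow> 'a set"
  assumes finite_choices: "finite C"
    and disjoint_choices: "\<lbrakk>i \<in> V; c \<in> C; c' \<in> C; c \<noteq> c'\<rbrakk> \<Longrightarrow> Q i c \<inter> Q i c' = {}"
    and finite_recovery_set: "\<lbrakk>i \<in> V; c \<in> C\<rbrakk> \<Longrightarrow> finite (Q i c)"
    and card_recovery_set_le: "\<lbrakk>i \<in> V; c \<in> C\<rbrakk> \<Longrightarrow> card (Q i c) \<le> 2"
    and not_in_recovery_set: "\<lbrakk>i \<in> V; c \<in> C\<rbrakk> \<Longrightarrow> i \<notin> Q i c"
begin

text \<open>A recovery set of \<open>i\<close> meeting \<open>B \<ni> i\<close> must meet \<open>B - {i}\<close>, and distinct ones do so at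
  distinct points.\<close>
lemma card_unblocked_choices_ge:
  assumes "finite B" "i \<in> B" "i \<in> V"
  shows "card C + 1 \<le> card {c \<in> C. Q i c \<inter> B = {}} + card B"
proof -
  let ?free = "{c \<in> C. Q i c \<inter> B = {}}" and ?blocked = "{c \<in> C. Q i c \<inter> B \<noteq> {}}"
  have "\<exists>y. y \<in> Q i c \<inter> (B - {i})" if "c \<in> ?blocked" for c
    using that not_in_recovery_set[OF assms(3), of c] by auto
  then obtain f where f: "\<And>c. c \<in> ?blocked \<Longrightarrow> f c \<in> Q i c \<inter> (B - {i})"
    by metis
  have "inj_on f ?blocked"
  proof (rule inj_onI)
    fix c c' assume "c \<in> ?blocked" "c' \<in> ?blocked" "f c = f c'"
    then show "c = c'"
      using f[of c] f[of c'] disjoint_choices[OF assms(3), of c c'] by auto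
  qed
  then have "card ?blocked \<le> card (B - {i})"
    by (rule card_inj_on_le) (use f assms(1) in auto)
  moreover have "card C = card (?free \<union> ?blocked)"
    by (rule arg_cong[where f = card]) blast
  then have "card C = card ?free + card ?blocked"
    by (simp add: card_Un_disjoint finite_choices disjoint_iff)
  moreover have "card (B - {i}) = card B - 1" "0 < card B"
    using assms(1,2) by (auto simp: card_gt_0_iff)
  ultimately show ?thesis
    by linarith
qed

lemma recovery_sets_Un_bounds:
  assumes "finite J" "\<And>j. j \<in> J \<Longrightarrow> val j \<in> V" "\<And>j. j \<in> J \<Longrightarrow> \<exists>c\<in>C. S j = Q (val j) c"
  shows "finite (\<Union>j\<in>J. S j)" "card (B \<union> (\<Union>j\<in>J. S j)) \<le> card B + 2 * card J"
proof -
  have S_small: "finite (S j)" "card (S j) \<le> 2" if "j \<in> J" for j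
    using assms(2,3)[OF that] finite_recovery_set card_recovery_set_le by auto
  then show "finite (\<Union>j\<in>J. S j)"
    using assms(1) by blast
  have "card (\<Union>j\<in>J. S j) \<le> (\<Sum>j\<in>J. card (S j))"
    by (rule card_UN_le) (rule assms(1))
  also have "\<dots> \<le> (\<Sum>j\<in>J. 2)"
    by (rule sum_mono) (rule S_small)
  finally show "card (B \<union> (\<Union>j\<in>J. S j)) \<le> card B + 2 * card J"
    using card_Un_le[of B "\<Union>j\<in>J. S j"] by simp
qed

lemma greedy_recovery_sets:
  assumes "finite J" "finite B" "\<And>j. j \<in> J \<Longrightarrow> val j \<in> B \<inter> V"
    and "card B + 2 * card J \<le> card C + 2"
  shows "\<exists>S. (\<forall>j\<in>J. (\<exists>c\<in>C. S j = Q (val j) c) \<and> S j \<inter> B = {}) \<and> disjoint_family_on S J"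
  using assms(1,3,4)
proof (induction J rule: finite_induct)
  case empty
  show ?case
    by (simp add: disjoint_family_on_def)
next
  case (insert x F)
  have "\<And>j. j \<in> F \<Longrightarrow> val j \<in> B \<inter> V" "card B + 2 * card F \<le> card C + 2"
    using insert.prems insert.hyps by simp_all
  then obtain S where S: "\<forall>j\<in>F. (\<exists>c\<in>C. S j = Q (val j) c) \<and> S j \<inter> B = {}"
    and disj: "disjoint_family_on S F"
    using insert.IH by blast
  define B' where "B' = B \<union> (\<Union>j\<in>F. S j)"
  have "\<And>j. j \<in> F \<Longrightarrow> val j \<in> V" "\<And>j. j \<in> F \<Longrightarrow> \<exists>c\<in>C. S j = Q (val j) c"
    using insert.prems(1) S by auto
  note bounds = recovery_sets_Un_bounds[OF insert.hyps(1) this]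
  have card_B': "card B' \<le> card B + 2 * card F"
    unfolding B'_def by (rule bounds(2))
  have "val x \<in> B \<inter> V"
    using insert.prems(1)[of x] by simp
  then have "finite B'" "val x \<in> B'" "val x \<in> V"
    unfolding B'_def using assms(2) bounds(1) by simp_all
  then have "card C + 1 \<le> card {c \<in> C. Q (val x) c \<inter> B' = {}} + card B'"
    by (rule card_unblocked_choices_ge)
  then have "card {c \<in> C. Q (val x) c \<inter> B' = {}} \<noteq> 0"
    using card_B' insert.prems(2) insert.hyps by simp
  then obtain c where c: "c \<in> C" "Q (val x) c \<inter> B' = {}"
    by (metis (mono_tags, lifting) card.empty empty_iff mem_Collect_eq subsetI subset_empty)
  let ?S = "S(x := Q (val x) c)"
  have "disjoint_family_on ?S F"
    by (rule disjoint_family_on_bisimulation[OF disj]) (use insert.hyps(2) in auto)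
  moreover have "?S x \<inter> (\<Union>j\<in>F. ?S j) = {}"
    using c(2) insert.hyps(2) unfolding B'_def by auto
  ultimately have disj': "disjoint_family_on ?S (insert x F)"
    unfolding disjoint_family_on_insert[OF insert.hyps(2)] by blast
  have sets': "\<forall>j\<in>insert x F. (\<exists>c\<in>C. ?S j = Q (val j) c) \<and> ?S j \<inter> B = {}"
    using S c unfolding B'_def by auto
  show ?case
    by (rule exI[of _ ?S]) (rule conjI[OF sets' disj'])
qed

lemma injective_recovery_sets:
  assumes "finite J" "finite B" "i \<in> B" "i \<in> V" "card B + card J \<le> card C + 1"
  shows "\<exists>S. (\<forall>j\<in>J. (\<exists>c\<in>C. S j = Q i c) \<and> S j \<inter> B = {}) \<and> disjoint_family_on S J"
proof -
  let ?free = "{c \<in> C. Q i c \<inter> B = {}}"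
  have "card J \<le> card ?free"
    using card_unblocked_choices_ge[OF assms(2-4)] assms(5) by linarith
  moreover have "finite ?free"
    using finite_choices by simp
  ultimately obtain g where g: "g ` J \<subseteq> ?free" "inj_on g J"
    using card_le_inj[OF assms(1)] by blast
  have "disjoint_family_on (\<lambda>j. Q i (g j)) J"
  proof (unfold disjoint_family_on_def, intro ballI impI)
    fix j j' assume "j \<in> J" "j' \<in> J" "j \<noteq> j'"
    then have "g j \<in> C" "g j' \<in> C" "g j \<noteq> g j'"
      using g by (auto dest: inj_onD)
    then show "Q i (g j) \<inter> Q i (g j') = {}"
      by (rule disjoint_choices[OF assms(4)])
  qed
  moreover have "\<forall>j\<in>J. (\<exists>c\<in>C. Q i (g j) = Q i c) \<and> Q i (g j) \<inter> B = {}"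
    using g(1) by blast
  ultimately show ?thesis
    by (intro exI[of _ "\<lambda>j. Q i (g j)"]) simp
qed

text \<open>The repeated requests of elements other than the most frequent one, \<open>i0\<close>, are served
  greedily; the repeats of \<open>i0\<close> come last, and since the recovery sets of \<open>i0\<close> are pairwise
  disjoint, each of them costs only one unit of the budget.\<close>
lemma repeat_recovery_sets:
  assumes "set xs \<subseteq> V" "i0 \<in> set xs"
    and "card (set xs) + 2 * card ({..<length xs} - first_occurrences xs - occurrences xs i0)
           + card (occurrences xs i0 - first_occurrences xs) \<le> card C + 1"
  shows "\<exists>S. (\<forall>j\<in>{..<length xs} - first_occurrences xs.
                (\<exists>c\<in>C. S j = Q (xs ! j) c) \<and> S j \<inter> set xs = {})
           \<and> disjoint_family_on S ({..<length xs} - first_occurrences xs)"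
proof -
  define J2 where "J2 = {..<length xs} - first_occurrences xs - occurrences xs i0"
  define J3 where "J3 = occurrences xs i0 - first_occurrences xs"
  have fin: "finite J2" "finite J3"
    unfolding J2_def J3_def occurrences_def by auto
  have J2_V: "\<And>j. j \<in> J2 \<Longrightarrow> xs ! j \<in> V"
    using assms(1) unfolding J2_def by (auto simp: nth_mem)
  have "\<exists>S. (\<forall>j\<in>J2. (\<exists>c\<in>C. S j = Q (xs ! j) c) \<and> S j \<inter> set xs = {}) \<and> disjoint_family_on S J2"
    by (rule greedy_recovery_sets) (use fin J2_V assms(3) in \<open>auto simp: J2_def nth_mem\<close>)
  then obtain S2 where S2: "\<forall>j\<in>J2. (\<exists>c\<in>C. S2 j = Q (xs ! j) c) \<and> S2 j \<inter> set xs = {}"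
    and disj2: "disjoint_family_on S2 J2"
    by blast
  define B where "B = set xs \<union> (\<Union>j\<in>J2. S2 j)"
  have J2_S2: "\<And>j. j \<in> J2 \<Longrightarrow> \<exists>c\<in>C. S2 j = Q (xs ! j) c"
    using S2 by blast
  have "finite (\<Union>j\<in>J2. S2 j)"
    using fin(1) J2_V J2_S2 by (rule recovery_sets_Un_bounds(1))
  have "card B \<le> card (set xs) + 2 * card J2"
    unfolding B_def using fin(1) J2_V J2_S2 by (rule recovery_sets_Un_bounds(2))
  then have "card B + card J3 \<le> card C + 1"
    using assms(3) unfolding J2_def J3_def by linarith
  moreover have "finite B" "i0 \<in> B" "i0 \<in> V"
    unfolding B_def using \<open>finite (\<Union>j\<in>J2. S2 j)\<close> assms(1,2) by auto
  ultimately have "\<exists>S. (\<forall>j\<in>J3. (\<exists>c\<in>C. S j = Q i0 c) \<and> S j \<inter> B = {}) \<and> disjoint_family_on S J3"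
    using fin(2) by (intro injective_recovery_sets) simp_all
  then obtain S3 where S3: "\<forall>j\<in>J3. (\<exists>c\<in>C. S3 j = Q i0 c) \<and> S3 j \<inter> B = {}"
    and disj3: "disjoint_family_on S3 J3"
    by blast
  have "{..<length xs} - first_occurrences xs = J2 \<union> J3"
    unfolding J2_def J3_def occurrences_def by auto
  moreover have "xs ! j = i0" if "j \<in> J3" for j
    using that unfolding J3_def occurrences_def by simp
  then have "(\<exists>c\<in>C. S3 j = Q (xs ! j) c) \<and> S3 j \<inter> set xs = {}" if "j \<in> J3" for j
    using S3 that unfolding B_def by auto
  moreover have "disjoint_family_on (\<lambda>j. if j \<in> J2 then S2 j else S3 j) (J2 \<union> J3)"
    by (rule disjoint_family_on_piecewise[OF disj2 disj3]) (use S3 in \<open>auto simp: B_def\<close>)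
  ultimately show ?thesis
    using S2 by (intro exI[of _ "\<lambda>j. if j \<in> J2 then S2 j else S3 j"]) auto
qed

lemma request_recovery_sets:
  assumes "set xs \<subseteq> V" "card C = 2 * t" "(length xs - t) * (length xs - t - 1) \<le> t"
  shows "\<exists>S. (\<forall>j<length xs. S j = {xs ! j} \<or> (\<exists>c\<in>C. S j = Q (xs ! j) c))
           \<and> disjoint_family_on S {..<length xs}"
proof (cases "xs = []")
  case True
  then show ?thesis
    by (intro exI[of _ "\<lambda>_. {}"]) (simp add: disjoint_family_on_def)
next
  case False
  define F where "F = first_occurrences xs"
  obtain i0 where "i0 \<in> set xs" "card (set xs)
      + 2 * card ({..<length xs} - first_occurrences xs - occurrences xs i0)
      + card (occurrences xs i0 - first_occurrences xs) \<le> card C + 1"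
    using request_budget[OF False assms(3)] assms(2) by auto
  then have "\<exists>S. (\<forall>j\<in>{..<length xs} - F. (\<exists>c\<in>C. S j = Q (xs ! j) c) \<and> S j \<inter> set xs = {})
      \<and> disjoint_family_on S ({..<length xs} - F)"
    unfolding F_def by (rule repeat_recovery_sets[OF assms(1)])
  then obtain S where S: "\<forall>j\<in>{..<length xs} - F. (\<exists>c\<in>C. S j = Q (xs ! j) c) \<and> S j \<inter> set xs = {}"
    and disj: "disjoint_family_on S ({..<length xs} - F)"
    by blast
  have "disjoint_family_on (\<lambda>j. {xs ! j}) F"
    using inj_on_nth_first_occurrences[of xs] unfolding F_def disjoint_family_on_def
    by (auto dest: inj_onD)
  moreover have "F \<union> ({..<length xs} - F) = {..<length xs}"
    unfolding F_def first_occurrences_def by auto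
  moreover have "S j \<inter> (\<Union>a\<in>F. {xs ! a}) = {}" if "j \<in> {..<length xs} - F" for j
  proof -
    have "(\<Union>a\<in>F. {xs ! a}) \<subseteq> set xs"
      unfolding F_def first_occurrences_def by auto
    then show ?thesis
      using S that by blast
  qed
  ultimately have "disjoint_family_on (\<lambda>j. if j \<in> F then {xs ! j} else S j) {..<length xs}"
    using disjoint_family_on_piecewise[OF _ disj] by metis
  moreover have "\<forall>j<length xs. (if j \<in> F then {xs ! j} else S j) = {xs ! j}
      \<or> (\<exists>c\<in>C. (if j \<in> F then {xs ! j} else S j) = Q (xs ! j) c)"
    using S by auto
  ultimately show ?thesis
    by (intro exI[of _ "\<lambda>j. if j \<in> F then {xs ! j} else S j"]) simp
qed

end

section \<open>Construction C\<close>

lemma idx_mem: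
  assumes "1 \<le> n"
  shows "idx n a \<in> {1..n}"
proof -
  have "0 \<le> (a - 1) mod int n" "(a - 1) mod int n < int n"
    using assms by simp_all
  then show ?thesis
    unfolding idx_def by (simp add: nat_less_iff)
qed

lemma idx_of_nat:
  assumes "i \<in> {1..n}"
  shows "idx n (int i) = i"
proof -
  have "(int i - 1) mod int n = int i - 1"
    using assms by (intro mod_pos_pos_trivial) auto
  then show ?thesis
    unfolding idx_def using assms by (simp add: nat_diff_distrib')
qed

lemma idx_eq_iff:
  assumes "1 \<le> n"
  shows "idx n a = idx n b \<longleftrightarrow> a mod int n = b mod int n"
proof -
  have "idx n a = idx n b \<longleftrightarrow> (a - 1) mod int n = (b - 1) mod int n"
    unfolding idx_def using assms by (simp add: eq_nat_nat_iff)
  also have "\<dots> \<longleftrightarrow> a mod int n = b mod int n"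
    by (simp add: mod_eq_dvd_iff)
  finally show ?thesis .
qed

lemma idx_add_idx:
  assumes "1 \<le> n"
  shows "idx n (int (idx n a) + b) = idx n (a + b)"
proof -
  have "int (idx n a) = (a - 1) mod int n + 1"
    unfolding idx_def using assms by simp
  then have "(int (idx n a) + b) mod int n = ((a - 1) mod int n + (1 + b)) mod int n"
    by (simp add: add.assoc)
  also have "\<dots> = (a + b) mod int n"
    by (simp add: mod_add_left_eq)
  finally show ?thesis
    using idx_eq_iff[OF assms] by blast
qed

lemma idx_add_eq_iff:
  assumes "1 \<le> n" "a \<in> {lo..<lo + int n}" "b \<in> {lo..<lo + int n}"
  shows "idx n (x + a) = idx n (x + b) \<longleftrightarrow> a = b"
proof
  assume "idx n (x + a) = idx n (x + b)"
  then have "int n dvd a - b"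
    unfolding idx_eq_iff[OF assms(1)] by (simp add: mod_eq_dvd_iff)
  moreover have "\<bar>a - b\<bar> < int n"
    using assms(2,3) by auto
  ultimately show "a = b"
    using dvd_imp_le_int[of "a - b" "int n"] by fastforce
qed simp

lemma good_vector_jpos:
  assumes "good_vector t v" "j \<in> {1..t}"
  shows "j < jpos v j" "jpos v j \<le> length v" "v ! (jpos v j - 1) = j" "v ! (jpos v j - j - 1) = j"
proof -
  define P where "P = {i \<in> {1..length v}. v ! (i - 1) = j}"
  have "card P = 2"
    using assms unfolding good_vector_def P_def by blast
  then obtain p q where P: "P = {p, q}" "p \<noteq> q"
    by (meson card_2_iff)
  have J: "jpos v j = Max P"
    unfolding jpos_def P_def ..
  then have "jpos v j \<in> P"
    using P by (simp add: max_def)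
  obtain p where p: "p \<in> P" "p \<noteq> jpos v j"
    using P by blast
  then have "p < jpos v j"
    using J P(1) by (auto simp: max_def)
  then have "jpos v j - p = j"
    using assms p(1) \<open>jpos v j \<in> P\<close> unfolding good_vector_def P_def by auto
  moreover have "1 \<le> p" "v ! (p - 1) = j"
    using p(1) unfolding P_def by simp_all
  moreover have "jpos v j - j = p"
    using \<open>jpos v j - p = j\<close> \<open>p < jpos v j\<close> by linarith
  ultimately show "j < jpos v j" "v ! (jpos v j - j - 1) = j"
    by simp_all
  show "jpos v j \<le> length v" "v ! (jpos v j - 1) = j"
    using \<open>jpos v j \<in> P\<close> unfolding P_def by auto
qed

text \<open>A choice \<open>(j, first)\<close> recovers \<open>x\<^sub>i\<close> from the coordinate \<open>y\<^sub>j\<close> in which \<open>x\<^sub>i\<close> is the first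
  (resp. second) summand, together with the other summand \<open>x\<^sub>i\<^sub>\<plusminus>\<^sub>j\<close>; that coordinate sits in
  the bucket at offset \<open>t + p\<close> from \<open>i\<close>, where \<open>p\<close> is the second (resp. first) position of \<open>j\<close>
  in \<open>v\<close>.\<close>
definition occurrence_pos :: "nat list \<Rightarrow> nat \<times> bool \<Rightarrow> nat" where
  "occurrence_pos v c = (if snd c then jpos v (fst c) else jpos v (fst c) - fst c)"

definition partner_offset :: "nat \<times> bool \<Rightarrow> int" where
  "partner_offset c = (if snd c then int (fst c) else - int (fst c))"

definition bucket_offset :: "nat \<Rightarrow> nat list \<Rightarrow> nat \<times> bool \<Rightarrow> int" where
  "bucket_offset t v c = int t + int (occurrence_pos v c)"

definition recovery_set :: "nat \<Rightarrow> nat list \<Rightarrow> nat \<Rightarrow> nat \<Rightarrow> nat \<times> bool \<Rightarrow> nat set" where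
  "recovery_set t v n i c = {idx n (int i + partner_offset c), idx n (int i + bucket_offset t v c)}"

lemma occurrence_pos:
  assumes "good_vector t v" "c \<in> {1..t} \<times> UNIV"
  shows "1 \<le> occurrence_pos v c" "occurrence_pos v c \<le> length v"
    "v ! (occurrence_pos v c - 1) = fst c"
  using good_vector_jpos[OF assms(1), of "fst c"] assms(2)
  unfolding occurrence_pos_def by (auto split: if_splits)

lemma inj_on_occurrence_pos:
  assumes "good_vector t v"
  shows "inj_on (occurrence_pos v) ({1..t} \<times> UNIV)"
proof (rule inj_onI)
  fix c c' assume c: "c \<in> {1..t} \<times> UNIV" "c' \<in> {1..t} \<times> UNIV"
    and eq: "occurrence_pos v c = occurrence_pos v c'"
  then have "fst c = fst c'"
    using occurrence_pos(3)[OF assms] by metis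
  moreover have "fst c < jpos v (fst c)"
    using good_vector_jpos(1)[OF assms] c(1) by auto
  ultimately have "snd c = snd c'"
    using eq c(1) unfolding occurrence_pos_def by (auto split: if_splits)
  with \<open>fst c = fst c'\<close> show "c = c'"
    by (simp add: prod_eq_iff)
qed

lemma constrC_at_bucket_offset:
  assumes "good_vector t v" "1 \<le> n" "c \<in> {1..t} \<times> UNIV" "i \<in> {1..n}"
  shows "constrC t v n x (idx n (int i + bucket_offset t v c)) (fst c)
       = x i + x (idx n (int i + partner_offset c))"
proof -
  obtain j b where c: "c = (j, b)" "1 \<le> j" "j < jpos v j"
    using assms(3) good_vector_jpos(1)[OF assms(1)] by auto
  define l where "l = idx n (int i + bucket_offset t v c)"
  have shift: "idx n (int l - int t - int (jpos v j) + s)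
      = idx n (int i + (if b then 0 else - int j) + s)" for s
  proof -
    have "int l - int t - int (jpos v j) + s = int l + (s - int t - int (jpos v j))"
      by simp
    also have "idx n \<dots> = idx n (int i + bucket_offset t v c + (s - int t - int (jpos v j)))"
      unfolding l_def by (rule idx_add_idx[OF assms(2)])
    also have "int i + bucket_offset t v c + (s - int t - int (jpos v j))
        = int i + (if b then 0 else - int j) + s"
      using c unfolding bucket_offset_def occurrence_pos_def by (auto simp: of_nat_diff)
    finally show ?thesis .
  qed
  have "constrC t v n x l j
      = x (idx n (int l - int t - int (jpos v j))) + x (idx n (int l - int t - int (jpos v j) + int j))"
    using c(2) by (simp add: constrC_def)
  also have "\<dots> = x (idx n (int i + (if b then 0 else - int j)))
      + x (idx n (int i + (if b then 0 else - int j) + int j))"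
    using shift[of 0] shift[of "int j"] by simp
  finally show ?thesis
    using idx_of_nat[OF assms(4)] unfolding l_def c
    by (cases b) (simp_all add: partner_offset_def)
qed

lemma recovery_offsets:
  assumes "good_vector t v" "c \<in> {1..t} \<times> UNIV"
  shows "partner_offset c \<in> {- int t..int t}" "partner_offset c \<noteq> 0"
    and "bucket_offset t v c \<in> {int t + 1..int t + int (length v)}"
  using assms(2) occurrence_pos[OF assms]
  unfolding partner_offset_def bucket_offset_def by auto

lemma inj_on_partner_offset: "inj_on partner_offset ({1..t} \<times> UNIV)"
  by (rule inj_onI) (auto simp: partner_offset_def prod_eq_iff split: if_splits)

lemma inj_on_bucket_offset:
  assumes "good_vector t v"
  shows "inj_on (bucket_offset t v) ({1..t} \<times> UNIV)"
proof (rule inj_onI)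
  fix c c' assume "c \<in> {1..t} \<times> UNIV" "c' \<in> {1..t} \<times> UNIV"
    "bucket_offset t v c = bucket_offset t v c'"
  then show "c = c'"
    using inj_on_occurrence_pos[OF assms] unfolding bucket_offset_def by (auto dest: inj_onD)
qed

context
  fixes t n :: nat and v :: "nat list"
  assumes good: "good_vector t v" and n_ge: "2 * t + length v + 1 \<le> n"
begin

text \<open>All offsets lie in a window of \<open>n\<close> consecutive integers, so distinct offsets give distinct
  buckets.\<close>
lemma idx_add_offset_eq_iff:
  assumes "a \<in> {- int t..int t + int (length v)}" "b \<in> {- int t..int t + int (length v)}"
  shows "idx n (int i + a) = idx n (int i + b) \<longleftrightarrow> a = b"
  by (rule idx_add_eq_iff[where lo = "- int t"]) (use n_ge assms in auto)

lemma partner_ne_bucket: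
  assumes "c \<in> {1..t} \<times> UNIV"
  shows "idx n (int i + partner_offset c) \<noteq> idx n (int i + bucket_offset t v c)"
  using recovery_offsets[OF good assms] by (subst idx_add_offset_eq_iff) auto

lemma recovery_family_recovery_set:
  "recovery_family {1..n} ({1..t} \<times> UNIV) (recovery_set t v n)"
proof
  show "finite ({1..t} \<times> (UNIV :: bool set))"
    by simp
next
  fix i and c c' :: "nat \<times> bool" assume c: "c \<in> {1..t} \<times> UNIV" "c' \<in> {1..t} \<times> UNIV" "c \<noteq> c'"
  have "partner_offset c \<noteq> partner_offset c'" "bucket_offset t v c \<noteq> bucket_offset t v c'"
    using c inj_on_partner_offset inj_on_bucket_offset[OF good] by (auto dest: inj_onD)
  then show "recovery_set t v n i c \<inter> recovery_set t v n i c' = {}"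
    using recovery_offsets[OF good c(1)] recovery_offsets[OF good c(2)]
    unfolding recovery_set_def by (auto simp: idx_add_offset_eq_iff)
next
  fix i and c :: "nat \<times> bool"
  show "finite (recovery_set t v n i c)" "card (recovery_set t v n i c) \<le> 2"
    unfolding recovery_set_def by (simp_all add: card_insert_if)
next
  fix i and c :: "nat \<times> bool" assume i: "i \<in> {1..n}" and c: "c \<in> {1..t} \<times> UNIV"
  have "idx n (int i + 0) \<noteq> idx n (int i + partner_offset c)"
    "idx n (int i + 0) \<noteq> idx n (int i + bucket_offset t v c)"
    using recovery_offsets[OF good c] by (subst idx_add_offset_eq_iff; auto)+
  then show "i \<notin> recovery_set t v n i c"
    unfolding recovery_set_def using idx_of_nat[OF i] by auto
qed

end

section \<open>The batch property\<close>

definition recoverable :: "(nat \<Rightarrow> nat) \<Rightarrow> ((nat \<Rightarrow> 'a::field) \<Rightarrow> nat \<Rightarrow> nat \<Rightarrow> 'a) \<Rightarrow> nat \<Rightarrow> nat set \<Rightarrow> bool"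
  where "recoverable Nb enc i R \<longleftrightarrow>
    (\<exists>(w :: nat \<Rightarrow> nat \<Rightarrow> 'a) (a :: nat \<Rightarrow> 'a). \<forall>x. x i = (\<Sum>l\<in>R. a l * (\<Sum>r<Nb l. w l r * enc x l r)))"

lemma recoverable_from_coordinates:
  assumes "\<And>l. l \<in> R \<Longrightarrow> r l < Nb l" "\<And>x. x i = (\<Sum>l\<in>R. a l * enc x l (r l))"
  shows "recoverable Nb enc i R"
proof -
  have "(\<Sum>r'<Nb l. of_bool (r' = r l) * enc x l r') = enc x l (r l)" if "l \<in> R" for x l
  proof -
    have "{..<Nb l} \<inter> {r'. r' = r l} = {r l}"
      using assms(1)[OF that] by auto
    then show ?thesis
      by simp
  qed
  then have "\<forall>x. x i = (\<Sum>l\<in>R. a l * (\<Sum>r'<Nb l. of_bool (r' = r l) * enc x l r'))"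
    using assms(2) by simp
  then show ?thesis
    unfolding recoverable_def by (intro exI) assumption
qed

lemma recoverable_mono:
  assumes "recoverable Nb enc i S" "S \<subseteq> R" "finite R"
  shows "recoverable Nb enc i R"
proof -
  obtain w a where wa: "\<forall>x. x i = (\<Sum>l\<in>S. a l * (\<Sum>r<Nb l. w l r * enc x l r))"
    using assms(1) unfolding recoverable_def by blast
  have restrict: "(\<Sum>l\<in>R. (of_bool (l \<in> S) * a l) * (\<Sum>r<Nb l. w l r * enc x l r))
      = (\<Sum>l\<in>S. a l * (\<Sum>r<Nb l. w l r * enc x l r))" for x
  proof -
    have "(\<Sum>l\<in>R. of_bool (l \<in> S) * (a l * (\<Sum>r<Nb l. w l r * enc x l r)))
        = (\<Sum>l\<in>R \<inter> {l. l \<in> S}. a l * (\<Sum>r<Nb l. w l r * enc x l r))"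
      using assms(3) by (rule sum_of_bool_mult_eq)
    moreover have "R \<inter> {l. l \<in> S} = S"
      using assms(2) by blast
    ultimately show ?thesis
      by (simp add: mult.assoc)
  qed
  show ?thesis
    unfolding recoverable_def using wa restrict
    by (intro exI[of _ w] exI[of _ "\<lambda>l. of_bool (l \<in> S) * a l"]) simp
qed

lemma constrC_add: "constrC t v n (\<lambda>i. x i + y i) l r = constrC t v n x l r + constrC t v n y l r"
  by (simp add: constrC_def)

lemma constrC_scale: "constrC t v n (\<lambda>i. c * x i) l r = c * constrC t v n x l r"
  by (simp add: constrC_def algebra_simps)

lemma constrC_recoverable_self:
  "recoverable (\<lambda>_. t + 1) (constrC t v n :: (nat \<Rightarrow> 'a::field) \<Rightarrow> _) i {i}"
  by (rule recoverable_from_coordinates[where r = "\<lambda>_. 0" and a = "\<lambda>_. 1"])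
    (simp_all add: constrC_def)

lemma constrC_recoverable_recovery_set:
  assumes "good_vector t v" "2 * t + length v + 1 \<le> n" "c \<in> {1..t} \<times> UNIV" "i \<in> {1..n}"
  shows "recoverable (\<lambda>_. t + 1) (constrC t v n :: (nat \<Rightarrow> 'a::field) \<Rightarrow> _) i (recovery_set t v n i c)"
proof -
  define p where "p = idx n (int i + partner_offset c)"
  define b where "b = idx n (int i + bucket_offset t v c)"
  have "p \<noteq> b"
    unfolding p_def b_def by (rule partner_ne_bucket[OF assms(1-3)])
  have "x i = constrC t v n x b (fst c) - constrC t v n x p 0" for x :: "nat \<Rightarrow> 'a"
    using constrC_at_bucket_offset[OF assms(1) _ assms(3,4), of x] assms(2)
    unfolding p_def b_def by (simp add: constrC_def)
  then show ?thesis
    unfolding recovery_set_def p_def[symmetric] b_def[symmetric]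
    using \<open>p \<noteq> b\<close> assms(3)
    by (intro recoverable_from_coordinates[where r = "\<lambda>l. if l = b then fst c else 0"
          and a = "\<lambda>l. if l = b then 1 else - 1"]) auto
qed

lemma constrC_recovers_candidate:
  assumes "good_vector t v" "2 * t + length v + 1 \<le> n" "i \<in> {1..n}"
    and "S = {i} \<or> (\<exists>c\<in>{1..t} \<times> UNIV. S = recovery_set t v n i c)"
  shows "S \<subseteq> {1..n} \<and> S \<noteq> {}
    \<and> recoverable (\<lambda>_. t + 1) (constrC t v n :: (nat \<Rightarrow> 'a::field) \<Rightarrow> _) i S"
proof -
  from assms(4) consider "S = {i}" | c where "c \<in> {1..t} \<times> UNIV" "S = recovery_set t v n i c"
    by blast
  then show ?thesis
  proof cases
    case 1
    then show ?thesis
      using assms(3) constrC_recoverable_self by auto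
  next
    case (2 c)
    have "S \<subseteq> {1..n}" "S \<noteq> {}"
      unfolding 2(2) recovery_set_def using idx_mem[of n] assms(2) by auto
    then show ?thesis
      unfolding 2(2) using constrC_recoverable_recovery_set[OF assms(1,2) 2(1) assms(3)] by simp
  qed
qed

lemma partition_extending_disjoint_family:
  assumes "0 < k" "disjoint_family_on S {..<k}" "\<And>j. j < k \<Longrightarrow> S j \<subseteq> M"
  obtains R where "disjoint_family_on R {..<k}" "(\<Union>j<k. R j) = M"
    and "\<And>j. j < k \<Longrightarrow> S j \<subseteq> R j" "\<And>j. j < k \<Longrightarrow> R j \<subseteq> M"
proof
  define R where "R j = (if j = 0 then S 0 \<union> (M - (\<Union>j<k. S j)) else S j)" for j
  show "disjoint_family_on R {..<k}"
    using assms(2) unfolding disjoint_family_on_def R_def by auto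
  show "(\<Union>j<k. R j) = M"
    using assms unfolding R_def by auto
  show "S j \<subseteq> R j" "R j \<subseteq> M" if "j < k" for j
    using assms(3) that unfolding R_def by auto
qed

lemma constrC_request_partition:
  assumes "good_vector t v" "2 * t + length v + 1 \<le> n"
    and "set is \<subseteq> {1..n}" "0 < length is" "(length is - t) * (length is - t - 1) \<le> t"
  shows "\<exists>R. (\<forall>j<length is. R j \<noteq> {})
           \<and> (\<forall>j<length is. \<forall>j'<length is. j \<noteq> j' \<longrightarrow> R j \<inter> R j' = {})
           \<and> (\<Union>j<length is. R j) = {1..n}
           \<and> (\<forall>j<length is.
                 recoverable (\<lambda>_. t + 1) (constrC t v n :: (nat \<Rightarrow> 'a::field) \<Rightarrow> _) (is ! j) (R j))"
proof -
  let ?C = "{1..t} \<times> (UNIV :: bool set)"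
  interpret recovery_family "{1..n}" ?C "recovery_set t v n"
    by (rule recovery_family_recovery_set[OF assms(1,2)])
  have "card ?C = 2 * t"
    by (simp add: card_cartesian_product)
  then have "\<exists>S. (\<forall>j<length is. S j = {is ! j} \<or> (\<exists>c\<in>?C. S j = recovery_set t v n (is ! j) c))
      \<and> disjoint_family_on S {..<length is}"
    by (rule request_recovery_sets[OF assms(3) _ assms(5)])
  then obtain S where S: "\<forall>j<length is. S j = {is ! j} \<or> (\<exists>c\<in>?C. S j = recovery_set t v n (is ! j) c)"
    and disj: "disjoint_family_on S {..<length is}"
    by blast
  have is_n: "is ! j \<in> {1..n}" if "j < length is" for j
    using assms(3) that by (auto simp: nth_mem subset_iff)
  have S_j: "S j \<subseteq> {1..n}" "S j \<noteq> {}"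
    "recoverable (\<lambda>_. t + 1) (constrC t v n :: (nat \<Rightarrow> 'a) \<Rightarrow> _) (is ! j) (S j)"
    if "j < length is" for j
  proof -
    have "S j = {is ! j} \<or> (\<exists>c\<in>?C. S j = recovery_set t v n (is ! j) c)"
      using S that by blast
    from constrC_recovers_candidate[where 'a = 'a, OF assms(1,2) is_n[OF that] this]
    show "S j \<subseteq> {1..n}" "S j \<noteq> {}"
      "recoverable (\<lambda>_. t + 1) (constrC t v n :: (nat \<Rightarrow> 'a) \<Rightarrow> _) (is ! j) (S j)"
      by simp_all
  qed
  obtain R where R: "disjoint_family_on R {..<length is}" "(\<Union>j<length is. R j) = {1..n}"
    and S_R: "\<And>j. j < length is \<Longrightarrow> S j \<subseteq> R j" "\<And>j. j < length is \<Longrightarrow> R j \<subseteq> {1..n}"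
    using partition_extending_disjoint_family[OF assms(4) disj S_j(1)] by blast
  have "R j \<noteq> {}" if "j < length is" for j
    using S_j(2)[OF that] S_R(1)[OF that] by blast
  moreover have "recoverable (\<lambda>_. t + 1) (constrC t v n :: (nat \<Rightarrow> 'a) \<Rightarrow> _) (is ! j) (R j)"
    if "j < length is" for j
    by (rule recoverable_mono[OF S_j(3)[OF that] S_R(1)[OF that] finite_subset[OF S_R(2)[OF that]]])
      simp
  moreover have "\<forall>j<length is. \<forall>j'<length is. j \<noteq> j' \<longrightarrow> R j \<inter> R j' = {}"
    using R(1) unfolding disjoint_family_on_def by simp
  ultimately show ?thesis
    using R(2) by (intro exI[of _ R] conjI allI impI) simp_all
qed

lemma request_size_bound:
  fixes t :: nat
  defines "k \<equiv> nat \<lfloor>(sqrt (real t + 1/4) + 1/2)\<^sup>2\<rfloor>"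
  assumes "1 \<le> t"
  shows "0 < k" "(k - t) * (k - t - 1) \<le> t"
proof -
  define x where "x = sqrt (real t + 1/4)"
  have x: "0 \<le> x" "x\<^sup>2 = real t + 1/4"
    unfolding x_def by simp_all
  have y: "(x + 1/2)\<^sup>2 = real t + 1/2 + x"
    using x(2) by (simp add: power2_eq_square algebra_simps)
  have k: "real k = real_of_int \<lfloor>real t + 1/2 + x\<rfloor>"
    unfolding k_def x_def[symmetric] y using x(1) by simp
  then have "real k \<le> real t + 1/2 + x"
    by linarith
  show "0 < k"
    using k x(1) assms(2) by linarith
  show "(k - t) * (k - t - 1) \<le> t"
  proof (cases "k \<le> t")
    case False
    define s where "s = k - t"
    have "real s = real k - real t"
      using False unfolding s_def by (simp add: of_nat_diff)
    then have "(real s - 1/2)\<^sup>2 \<le> x\<^sup>2"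
      using \<open>real k \<le> _\<close> False by (intro power_mono) auto
    then have "real s * real s - real s \<le> real t"
      using x(2) by (simp add: power2_eq_square algebra_simps)
    moreover have "1 \<le> s"
      using False unfolding s_def by simp
    then have "real (s * (s - 1)) = real s * real s - real s"
      by (simp add: of_nat_diff algebra_simps)
    ultimately have "real (s * (s - 1)) \<le> real t"
      by simp
    then show ?thesis
      unfolding s_def by (simp only: of_nat_le_iff)
  qed simp
qed

theorem corollary4p9:
  fixes t n :: nat and v :: "nat list"
  assumes "t \<ge> 1"
    and "good_vector t v"
    and "n = (if length v = 2 * t then 4 * t + 1 else 4 * t + 2)"
  shows "is_BAC n ((t + 1) * n) (nat \<lfloor>(sqrt (real t + 1/4) + 1/2)\<^sup>2\<rfloor>) n (\<lambda>_. t + 1)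
           (constrC t v n :: (nat \<Rightarrow> 'a::{field,finite}) \<Rightarrow> _)"
proof -
  have n: "2 * t + length v + 1 \<le> n"
    using assms(2,3) unfolding good_vector_def by auto
  define k where "k = nat \<lfloor>(sqrt (real t + 1/4) + 1/2)\<^sup>2\<rfloor>"
  have request: "\<exists>R. (\<forall>j<k. R j \<noteq> {}) \<and> (\<forall>j<k. \<forall>j'<k. j \<noteq> j' \<longrightarrow> R j \<inter> R j' = {})
      \<and> (\<Union>j<k. R j) = {1..n}
      \<and> (\<forall>j<k. recoverable (\<lambda>_. t + 1) (constrC t v n :: (nat \<Rightarrow> 'a) \<Rightarrow> _) (is ! j) (R j))"
    if "length is = k" "set is \<subseteq> {1..n}" for "is"
    unfolding that(1)[symmetric]
    by (rule constrC_request_partition[OF assms(2) n that(2)])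
      (use request_size_bound[OF assms(1)] in \<open>simp_all add: that(1) k_def\<close>)
  show ?thesis
    unfolding is_BAC_def k_def[symmetric] using request[unfolded recoverable_def]
    by (simp add: constrC_add constrC_scale)
qed

end
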